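(* Let $\alpha:\mathcal X\to[\alpha_{\min},\alpha_{\max}]$ with $0<\alpha_{\min}\le\alpha_{\max}<1$, and let $\mathcal A(x,m)=\{\mu\in\mathcal P(\mathcal X):\mu(y)\le m(y)/\alpha(x)\ \forall y\in\mathcal X\}$ (the dual sets of the Average Value at Risk mapping $\sigma(x,m,v)=\min_{\eta\in\mathbb R}\{\eta+\frac1{\alpha(x)}\sum_y m(y)\max(0,v(y)-\eta)\}$). Then the associated risk multikernel $\mathfrak M$ is semi-differentiable at $\mathcal I$ in every direction $K\in\mathcal T_{\mathcal Q}(\mathcal I)$, with semi-derivative \[ \mathfrak D(K)=\Big\{D\in\mathcal T_{\mathcal Q}(\mathcal I): 0\le D(y|x)\le\frac{K(y|x)}{\alpha(x)}\ \text{for all } x,y\in\mathcal X,\ y\ne x,\ \ D(\mathcal X|x)=0\ \text{for all }x\in\mathcal X\Big\}. \]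
   Context: $\mathcal X$ is a finite set, $\mathcal P(\mathcal X)$ the probability measures on $\mathcal X$, $\mathcal S$ the vector space of signed kernels $K:\mathcal X\to\mathcal M(\mathcal X)$, written $K(y|x)$, with $K(\mathcal X|x)=\sum_yK(y|x)$ and norm $\|K\|=\sup\{\sum_{y}\varphi(y)K(y|x):x\in\mathcal X,\ -1\le\varphi\le1\}$; $\mathcal Q\subset\mathcal S$ the stochastic kernels; $\mathcal I(x)=\delta_x$. $\mathrm d(K,B)=\inf_{M\in B}\|K-M\|$ ($=+\infty$ if $B=\emptyset$), and $\mathrm{dist}(\mathcal S_1,\mathcal S_2)=\max(\sup_{K\in\mathcal S_1}\mathrm d(K,\mathcal S_2),\sup_{K\in\mathcal S_2}\mathrm d(K,\mathcal S_1))$. The tangent cone is $\mathcal T_{\mathcal Q}(\mathcal I)=\{K\in\mathcal S:\lim_{\tau\downarrow0}\mathrm d(K,\frac1\tau(\mathcal Q-\mathcal I))=0\}$. The risk multikernel associated with $\mathcal A$ is $\mathfrak M(Q)=\{M\in\mathcal Q: M(x)\in\mathcal A(x,Q(x))\ \forall x\}$. $\mathfrak M$ is semi-differentiable at $\mathcal I$ in direction $K\in\mathcal T_{\mathcal Q}(\mathcal I)$ with semi-derivative $\mathfrak D(K)$ (a nonempty subset of $\mathcal S$) if for every $\varepsilon_n\downarrow0$ and every $K_n\to K$ with $K_n\in\mathcal T_{\mathcal Q}(\mathcal I)$, $\lim_{n}\mathrm{dist}\big(\frac1{\varepsilon_n}[\mathfrak M(\mathcal I+\varepsilon_nK_n)-\mathcal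 I],\mathfrak D(K)\big)=0$. *)

theory Defs
  imports "HOL-Analysis.Analysis"
begin

text \<open>Signed kernels on a finite set 'x: K x y stands for K(y|x).\<close>
type_synonym 'x kernel = "'x \<Rightarrow> 'x \<Rightarrow> real"

definition kmass :: "('x::finite) kernel \<Rightarrow> 'x \<Rightarrow> real" where
  "kmass K x = (\<Sum>y\<in>UNIV. K x y)"

definition knorm :: "('x::finite) kernel \<Rightarrow> real" where
  "knorm K = Sup {(\<Sum>y\<in>UNIV. \<phi> y * K x y) | x \<phi>. \<forall>y. -1 \<le> \<phi> y \<and> \<phi> y \<le> 1}"

definition prob_vecs :: "('x::finite \<Rightarrow> real) set" where
  "prob_vecs = {\<mu>. (\<forall>y. 0 \<le> \<mu> y) \<and> (\<Sum>y\<in>UNIV. \<mu> y) = 1}"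

definition stoch_kernels :: "('x::finite) kernel set" where
  "stoch_kernels = {Q. \<forall>x. Q x \<in> prob_vecs}"

definition id_kernel :: "('x::finite) kernel" where
  "id_kernel = (\<lambda>x y. if y = x then 1 else 0)"

definition kd :: "('x::finite) kernel \<Rightarrow> 'x kernel set \<Rightarrow> ereal" where
  "kd K B = (if B = {} then \<infinity> else ereal (Inf {knorm (K - M) | M. M \<in> B}))"

definition kdist :: "('x::finite) kernel set \<Rightarrow> 'x kernel set \<Rightarrow> ereal" where
  "kdist S1 S2 = max (SUP K\<in>S1. kd K S2) (SUP K\<in>S2. kd K S1)"

definition tangent_cone_I :: "('x::finite) kernel set" where
  "tangent_cone_I = {K. ((\<lambda>\<tau>. kd K ((\<lambda>M x y. (M x y - id_kernel x y) / \<tau>) ` stoch_kernels))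
                          \<longlongrightarrow> 0) (at_right 0)}"

definition risk_multikernel ::
  "('x::finite \<Rightarrow> ('x \<Rightarrow> real) \<Rightarrow> ('x \<Rightarrow> real) set) \<Rightarrow> 'x kernel \<Rightarrow> 'x kernel set" where
  "risk_multikernel A Q = {M \<in> stoch_kernels. \<forall>x. M x \<in> A x (Q x)}"

definition semidiff_at_I ::
  "('x::finite kernel \<Rightarrow> 'x kernel set) \<Rightarrow> 'x kernel \<Rightarrow> 'x kernel set \<Rightarrow> bool" where
  "semidiff_at_I MM K D \<longleftrightarrow> K \<in> tangent_cone_I \<and> D \<noteq> {} \<and>
     (\<forall>\<epsilon> Ks. (\<forall>n. 0 < \<epsilon> n) \<and> decseq \<epsilon> \<and> \<epsilon> \<longlonglongrightarrow> 0 \<and>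
        (\<forall>n. Ks n \<in> tangent_cone_I) \<and> (\<lambda>n. knorm (Ks n - K)) \<longlonglongrightarrow> 0 \<longrightarrow>
        (\<lambda>n. kdist ((\<lambda>M x y. (M x y - id_kernel x y) / \<epsilon> n)
                       ` MM (\<lambda>x y. id_kernel x y + \<epsilon> n * Ks n x y)) D) \<longlonglongrightarrow> 0)"

definition avar_dual :: "('x::finite \<Rightarrow> real) \<Rightarrow> 'x \<Rightarrow> ('x \<Rightarrow> real) \<Rightarrow> ('x \<Rightarrow> real) set" where
  "avar_dual \<alpha> x m = {\<mu> \<in> prob_vecs. \<forall>y. \<mu> y \<le> m y / \<alpha> x}"

end

theory Submission
  imports Defs
begin

text \<open>The tangent cone of the stochastic kernels at the identity consists exactly of the
  generator kernels: nonnegative off the diagonal, with zero row sums. For a generator \<open>L\<close> and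
  small \<open>\<epsilon> > 0\<close>, a kernel \<open>I + \<epsilon> D\<close> lies in the AVaR multikernel at \<open>I + \<epsilon> L\<close> exactly when
  \<open>D\<close> is a generator with \<open>D(y|x) \<le> L(y|x) / \<alpha>(x)\<close> off the diagonal; the diagonal constraint is
  slack because \<open>\<alpha> < 1\<close>. So the difference quotients along \<open>I + \<epsilon>\<^sub>n K\<^sub>n\<close> are eventually the sets
  \<open>\<DD>(K\<^sub>n)\<close> themselves, and clipping off-diagonal entries shows that \<open>\<DD>\<close> is Lipschitz for the
  Hausdorff distance, with constant \<open>2 / \<alpha>\<^sub>m\<^sub>i\<^sub>n\<close>.\<close>

lemma sum_mult_le_sum_abs:
  fixes f \<phi> :: "'a \<Rightarrow> real"
  assumes "\<And>y. y \<in> A \<Longrightarrow> \<bar>\<phi> y\<bar> \<le> 1"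
  shows "(\<Sum>y\<in>A. \<phi> y * f y) \<le> (\<Sum>y\<in>A. \<bar>f y\<bar>)"
proof (rule sum_mono)
  fix y assume "y \<in> A"
  have "\<phi> y * f y \<le> \<bar>\<phi> y\<bar> * \<bar>f y\<bar>" by (metis abs_ge_self abs_mult)
  also have "\<dots> \<le> \<bar>f y\<bar>" using assms[OF \<open>y \<in> A\<close>] by (simp add: mult_left_le_one_le)
  finally show "\<phi> y * f y \<le> \<bar>f y\<bar>" .
qed

lemma knorm_eq_Max_row_sum:
  fixes M :: "'x::finite kernel"
  shows "knorm M = (MAX x. \<Sum>y\<in>UNIV. \<bar>M x y\<bar>)"
proof -
  let ?S = "{(\<Sum>y\<in>UNIV. \<phi> y * M x y) | x \<phi>. \<forall>y. -1 \<le> \<phi> y \<and> \<phi> y \<le> 1}"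
  let ?m = "MAX x. \<Sum>y\<in>UNIV. \<bar>M x y\<bar>"
  have le_m: "v \<le> ?m" if "v \<in> ?S" for v
  proof -
    obtain x \<phi> where v: "v = (\<Sum>y\<in>UNIV. \<phi> y * M x y)" and \<phi>: "\<forall>y. -1 \<le> \<phi> y \<and> \<phi> y \<le> 1"
      using \<open>v \<in> ?S\<close> by blast
    have "v \<le> (\<Sum>y\<in>UNIV. \<bar>M x y\<bar>)"
      unfolding v using \<phi> by (intro sum_mult_le_sum_abs) (simp add: abs_le_iff)
    also have "\<dots> \<le> ?m" by (rule Max_ge) auto
    finally show ?thesis .
  qed
  have row_in: "(\<Sum>y\<in>UNIV. \<bar>M x y\<bar>) \<in> ?S" for x
  proof -
    have "(\<Sum>y\<in>UNIV. \<bar>M x y\<bar>) = (\<Sum>y\<in>UNIV. sgn (M x y) * M x y)"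
      by (simp add: abs_sgn mult.commute)
    moreover have "\<forall>y. -1 \<le> sgn (M x y) \<and> sgn (M x y) \<le> (1::real)"
      by (simp add: sgn_real_def)
    ultimately show ?thesis by fastforce
  qed
  have "knorm M \<le> ?m"
    unfolding knorm_def using row_in by (intro cSup_least le_m) blast+
  moreover have "?m \<le> knorm M"
  proof -
    have "?m \<in> range (\<lambda>x. \<Sum>y\<in>UNIV. \<bar>M x y\<bar>)" by (rule Max_in) auto
    then obtain x where "?m = (\<Sum>y\<in>UNIV. \<bar>M x y\<bar>)" by blast
    then have "?m \<in> ?S" using row_in[of x] by simp
    then show ?thesis unfolding knorm_def by (rule cSup_upper[OF _ bdd_aboveI[OF le_m]])
  qed
  ultimately show ?thesis by simp
qed

lemma knorm_le_iff:
  fixes M :: "'x::finite kernel"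
  shows "knorm M \<le> c \<longleftrightarrow> (\<forall>x. (\<Sum>y\<in>UNIV. \<bar>M x y\<bar>) \<le> c)"
  unfolding knorm_eq_Max_row_sum by simp

lemma row_sum_abs_le_knorm: "(\<Sum>y\<in>UNIV. \<bar>M x y\<bar>) \<le> knorm (M :: 'x::finite kernel)"
  unfolding knorm_eq_Max_row_sum by (rule Max_ge) auto

lemma abs_le_knorm: "\<bar>M x y\<bar> \<le> knorm (M :: 'x::finite kernel)"
  by (rule order_trans[OF member_le_sum row_sum_abs_le_knorm]) auto

lemma knorm_nonneg: "0 \<le> knorm (M :: 'x::finite kernel)"
  using abs_le_knorm[of M] by (meson abs_ge_zero order_trans)

lemma abs_kmass_le_knorm: "\<bar>kmass M x\<bar> \<le> knorm (M :: 'x::finite kernel)"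
  unfolding kmass_def by (rule order_trans[OF sum_abs row_sum_abs_le_knorm])

lemma knorm_minus_commute: "knorm (A - B) = knorm (B - A :: 'x::finite kernel)"
  unfolding knorm_eq_Max_row_sum by (simp add: abs_minus_commute)

lemma knorm_diff_self [simp]: "knorm (A - A :: 'x::finite kernel) = 0"
  using knorm_le_iff[of "A - A" 0] knorm_nonneg[of "A - A"] by simp

lemma kd_le_knorm:
  fixes A :: "'x::finite kernel"
  assumes "D \<in> B"
  shows "kd A B \<le> knorm (A - D)"
proof -
  have "Inf {knorm (A - M) | M. M \<in> B} \<le> knorm (A - D)"
    using assms knorm_nonneg by (intro cInf_lower bdd_belowI[of _ 0]) auto
  then show ?thesis using assms unfolding kd_def by auto
qed

lemma kd_geI:
  fixes A :: "'x::finite kernel"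
  assumes "B \<noteq> {}" and "\<And>D. D \<in> B \<Longrightarrow> c \<le> knorm (A - D)"
  shows "c \<le> kd A B"
proof -
  have "c \<le> Inf {knorm (A - M) | M. M \<in> B}"
    using assms by (intro cInf_greatest) auto
  then show ?thesis using assms unfolding kd_def by auto
qed

lemma kd_nonneg: "B \<noteq> {} \<Longrightarrow> 0 \<le> kd (A :: 'x::finite kernel) B"
  unfolding zero_ereal_def by (rule kd_geI) (auto simp: knorm_nonneg)

lemma kd_eq_0:
  assumes "A \<in> B"
  shows "kd (A :: 'x::finite kernel) B = 0"
proof (rule order.antisym)
  show "kd A B \<le> 0" using kd_le_knorm[OF assms, of A] by (simp add: zero_ereal_def)
  show "0 \<le> kd A B" using assms kd_nonneg by blast
qed

lemma kdist_leI:
  fixes S\<^sub>1 S\<^sub>2 :: "'x::finite kernel set"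
  assumes "\<And>A. A \<in> S\<^sub>1 \<Longrightarrow> \<exists>D\<in>S\<^sub>2. knorm (A - D) \<le> r"
    and "\<And>A. A \<in> S\<^sub>2 \<Longrightarrow> \<exists>D\<in>S\<^sub>1. knorm (A - D) \<le> r"
  shows "kdist S\<^sub>1 S\<^sub>2 \<le> r"
proof -
  have "kd A S' \<le> r" if "\<exists>D\<in>S'. knorm (A - D) \<le> r" for A and S' :: "'x kernel set"
    using that kd_le_knorm by (meson ereal_less_eq(3) order_trans)
  then show ?thesis
    unfolding kdist_def using assms by (auto intro!: SUP_least)
qed

lemma kdist_nonneg:
  fixes S\<^sub>1 S\<^sub>2 :: "'x::finite kernel set"
  assumes "S\<^sub>1 \<noteq> {}" and "S\<^sub>2 \<noteq> {}"
  shows "0 \<le> kdist S\<^sub>1 S\<^sub>2"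
proof -
  obtain A where "A \<in> S\<^sub>1" using assms by blast
  then have "0 \<le> (SUP K\<in>S\<^sub>1. kd K S\<^sub>2)"
    using kd_nonneg[OF assms(2), of A] by (meson SUP_upper order_trans)
  then show ?thesis unfolding kdist_def by (rule order_trans[OF _ max.cobounded1])
qed

definition generator_kernel :: "'x::finite kernel \<Rightarrow> bool" where
  "generator_kernel K \<longleftrightarrow> (\<forall>x y. y \<noteq> x \<longrightarrow> 0 \<le> K x y) \<and> (\<forall>x. kmass K x = 0)"

definition diff_quotient :: "real \<Rightarrow> 'x::finite kernel \<Rightarrow> 'x kernel" where
  "diff_quotient \<tau> = (\<lambda>M x y. (M x y - id_kernel x y) / \<tau>)"

definition perturb_id :: "real \<Rightarrow> 'x::finite kernel \<Rightarrow> 'x kernel" where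
  "perturb_id \<tau> D = (\<lambda>x y. id_kernel x y + \<tau> * D x y)"

lemma kmass_eq_diag_plus_off_diag:
  "kmass (D :: 'x::finite kernel) x = D x x + (\<Sum>y\<in>UNIV - {x}. D x y)"
  unfolding kmass_def by (rule sum.remove) auto

lemma generator_kernel_diag:
  "generator_kernel D \<Longrightarrow> D x x = - (\<Sum>y\<in>UNIV - {x}. D x y)"
  unfolding generator_kernel_def using kmass_eq_diag_plus_off_diag[of D x] by simp

lemma generator_kernel_diag_nonpos: "generator_kernel D \<Longrightarrow> D x x \<le> 0"
  using generator_kernel_diag[of D x] unfolding generator_kernel_def
  by (auto intro!: sum_nonneg)

lemma generator_kernel_zero: "generator_kernel (\<lambda>x y. 0 :: real)"
  unfolding generator_kernel_def kmass_def by simp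

lemma image_diff_quotient:
  "\<tau> \<noteq> 0 \<Longrightarrow> diff_quotient \<tau> ` S = {D. perturb_id \<tau> D \<in> S}"
proof (intro equalityI subsetI)
  fix D assume "\<tau> \<noteq> 0" and "D \<in> diff_quotient \<tau> ` S"
  then show "D \<in> {D. perturb_id \<tau> D \<in> S}"
    by (auto simp: diff_quotient_def perturb_id_def)
next
  fix D assume "\<tau> \<noteq> 0" and "D \<in> {D. perturb_id \<tau> D \<in> S}"
  moreover have "D = diff_quotient \<tau> (perturb_id \<tau> D)"
    using \<open>\<tau> \<noteq> 0\<close> by (simp add: diff_quotient_def perturb_id_def)
  ultimately show "D \<in> diff_quotient \<tau> ` S" by blast
qed

lemma perturb_id_stoch_kernels_iff:
  fixes D :: "'x::finite kernel"
  assumes "0 < \<tau>"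
  shows "perturb_id \<tau> D \<in> stoch_kernels \<longleftrightarrow> generator_kernel D \<and> (\<forall>x. 0 \<le> 1 + \<tau> * D x x)"
proof -
  have row_sum: "(\<Sum>y\<in>UNIV. perturb_id \<tau> D x y) = 1 + \<tau> * kmass D x" for x
    by (simp add: perturb_id_def id_kernel_def kmass_def sum.distrib sum_distrib_left)
  have off_diag: "0 \<le> perturb_id \<tau> D x y \<longleftrightarrow> 0 \<le> D x y" if "y \<noteq> x" for x y
    using that assms by (simp add: perturb_id_def id_kernel_def zero_le_mult_iff)
  have diag: "perturb_id \<tau> D x x = 1 + \<tau> * D x x" for x
    by (simp add: perturb_id_def id_kernel_def)
  have "(\<forall>x y. 0 \<le> perturb_id \<tau> D x y) \<longleftrightarrow> (\<forall>x y. y \<noteq> x \<longrightarrow> 0 \<le> D x y) \<and> (\<forall>x. 0 \<le> 1 + \<tau> * D x x)"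
    by (metis diag off_diag)
  then show ?thesis
    using assms by (auto simp: stoch_kernels_def prob_vecs_def generator_kernel_def row_sum)
qed

lemma generator_kernel_separated:
  assumes "\<not> generator_kernel (K :: 'x::finite kernel)"
  obtains c where "0 < c" and "\<And>D :: 'x kernel. generator_kernel D \<Longrightarrow> c \<le> knorm (K - D)"
proof (cases "\<exists>x y. y \<noteq> x \<and> K x y < 0")
  case True
  then obtain x y where xy: "y \<noteq> x" "K x y < 0" by blast
  show ?thesis
  proof (rule that[of "- K x y"])
    fix D :: "'x kernel" assume "generator_kernel D"
    then have "0 \<le> D x y" using xy unfolding generator_kernel_def by blast
    then show "- K x y \<le> knorm (K - D)" using abs_le_knorm[of "K - D" x y] by simp
  qed (use xy in simp)
next
  case False
  then obtain x where x: "kmass K x \<noteq> 0"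
    using assms unfolding generator_kernel_def by force
  show ?thesis
  proof (rule that[of "\<bar>kmass K x\<bar>"])
    fix D :: "'x kernel" assume "generator_kernel D"
    then have "kmass (K - D) x = kmass K x"
      unfolding generator_kernel_def kmass_def by (simp add: sum_subtractf)
    then show "\<bar>kmass K x\<bar> \<le> knorm (K - D)" using abs_kmass_le_knorm[of "K - D" x] by simp
  qed (use x in simp)
qed

lemma diff_quotient_image_stoch_kernels:
  "0 < \<tau> \<Longrightarrow> diff_quotient \<tau> ` stoch_kernels = {D. generator_kernel D \<and> (\<forall>x. 0 \<le> 1 + \<tau> * D x x)}"
  by (simp add: image_diff_quotient perturb_id_stoch_kernels_iff)

lemma tangent_cone_I_iff_kd_tendsto:
  "K \<in> tangent_cone_I \<longleftrightarrow> ((\<lambda>\<tau>. kd K (diff_quotient \<tau> ` stoch_kernels)) \<longlongrightarrow> 0) (at_right 0)"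
  by (simp add: tangent_cone_I_def diff_quotient_def)

lemma tangent_cone_I_imp_generator_kernel:
  assumes "K \<in> tangent_cone_I"
  shows "generator_kernel (K :: 'x::finite kernel)"
proof (rule ccontr)
  assume "\<not> generator_kernel K"
  then obtain c where "0 < c" and c: "\<And>D. generator_kernel D \<Longrightarrow> c \<le> knorm (K - D)"
    using generator_kernel_separated by blast
  have ge: "c \<le> kd K (diff_quotient \<tau> ` stoch_kernels)" if "0 < \<tau>" for \<tau>
    using that generator_kernel_zero by (intro kd_geI c) (auto simp: diff_quotient_image_stoch_kernels)
  have "\<forall>\<^sub>F \<tau> in at_right 0. kd K (diff_quotient \<tau> ` stoch_kernels) < c"
    using assms \<open>0 < c\<close> unfolding tangent_cone_I_iff_kd_tendsto by (intro order_tendstoD(2)) auto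
  moreover have "\<forall>\<^sub>F \<tau> in at_right (0::real). 0 < \<tau>"
    by (rule eventually_at_right_less)
  ultimately have "\<forall>\<^sub>F \<tau> in at_right (0::real). False"
    by eventually_elim (meson ge not_le)
  then show False by simp
qed

lemma generator_kernel_imp_tangent_cone_I:
  assumes K: "generator_kernel K"
  shows "K \<in> tangent_cone_I"
proof -
  have "K \<in> diff_quotient \<tau> ` stoch_kernels" if "0 < \<tau>" "\<tau> < 1 / (1 + knorm K)" for \<tau>
  proof -
    have "0 \<le> 1 + \<tau> * K x x" for x
    proof -
      have "- (\<tau> * K x x) \<le> \<tau> * (1 + knorm K)"
        using that abs_le_knorm[of K x x] by (intro mult_left_mono[of "- K x x", simplified]) auto
      also have "\<dots> \<le> 1" using that knorm_nonneg[of K] by (simp add: field_simps)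
      finally show ?thesis by simp
    qed
    then show ?thesis using that K by (simp add: diff_quotient_image_stoch_kernels)
  qed
  then have "\<forall>\<^sub>F \<tau> in at_right 0. kd K (diff_quotient \<tau> ` stoch_kernels) = 0"
    unfolding eventually_at_right_field using knorm_nonneg[of K]
    by (intro exI[of _ "1 / (1 + knorm K)"]) (auto intro: kd_eq_0)
  then show ?thesis
    unfolding tangent_cone_I_iff_kd_tendsto by (rule tendsto_eventually)
qed

lemma tangent_cone_I_iff_generator_kernel:
  "K \<in> tangent_cone_I \<longleftrightarrow> generator_kernel (K :: 'x::finite kernel)"
  using tangent_cone_I_imp_generator_kernel generator_kernel_imp_tangent_cone_I by blast

definition avar_derivative :: "('x::finite \<Rightarrow> real) \<Rightarrow> 'x kernel \<Rightarrow> 'x kernel set" where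
  "avar_derivative \<alpha> L = {D. generator_kernel D \<and> (\<forall>x y. y \<noteq> x \<longrightarrow> D x y \<le> L x y / \<alpha> x)}"

lemma zero_in_avar_derivative:
  "generator_kernel L \<Longrightarrow> \<forall>x. 0 < \<alpha> x \<Longrightarrow> (\<lambda>x y. 0) \<in> avar_derivative \<alpha> L"
  unfolding avar_derivative_def generator_kernel_def kmass_def by (auto intro: divide_nonneg_pos)

lemma avar_derivative_diag_ge:
  assumes "D \<in> avar_derivative \<alpha> L" and "generator_kernel L"
  shows "L x x / \<alpha> x \<le> D x x"
proof -
  have "(\<Sum>y\<in>UNIV - {x}. D x y) \<le> (\<Sum>y\<in>UNIV - {x}. L x y / \<alpha> x)"
    using assms(1) unfolding avar_derivative_def by (intro sum_mono) auto
  then show ?thesis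
    using assms generator_kernel_diag[of D x] generator_kernel_diag[of L x]
    by (simp add: avar_derivative_def sum_divide_distrib)
qed

lemma perturb_id_in_avar_multikernel_imp:
  assumes "0 < \<epsilon>"
    and "perturb_id \<epsilon> D \<in> risk_multikernel (avar_dual \<alpha>) (perturb_id \<epsilon> L)"
  shows "D \<in> avar_derivative \<alpha> L"
proof -
  have "generator_kernel D"
    using assms perturb_id_stoch_kernels_iff by (auto simp: risk_multikernel_def)
  moreover have "D x y \<le> L x y / \<alpha> x" if "y \<noteq> x" for x y
  proof -
    have "perturb_id \<epsilon> D x y \<le> perturb_id \<epsilon> L x y / \<alpha> x"
      using assms(2) by (simp add: risk_multikernel_def avar_dual_def)
    then have "\<epsilon> * D x y \<le> \<epsilon> * L x y / \<alpha> x"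
      using that by (simp add: perturb_id_def id_kernel_def)
    then show ?thesis using assms(1) by (metis mult_left_le_imp_le times_divide_eq_right)
  qed
  ultimately show ?thesis unfolding avar_derivative_def by blast
qed

lemma perturb_id_in_avar_multikernel:
  assumes "0 < \<epsilon>" and L: "generator_kernel L" and \<alpha>: "\<forall>x. 0 < \<alpha> x"
    and small: "\<forall>x. \<epsilon> * \<bar>L x x\<bar> \<le> min (\<alpha> x) (1 - \<alpha> x)"
    and D: "D \<in> avar_derivative \<alpha> L"
  shows "perturb_id \<epsilon> D \<in> risk_multikernel (avar_dual \<alpha>) (perturb_id \<epsilon> L)"
proof -
  have D_gen: "generator_kernel D" and D_off: "\<And>x y. y \<noteq> x \<Longrightarrow> D x y \<le> L x y / \<alpha> x"
    using D unfolding avar_derivative_def by auto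
  have L_diag: "- \<epsilon> * L x x \<le> \<alpha> x" "\<alpha> x \<le> 1 + \<epsilon> * L x x" for x
    using small[rule_format, of x] abs_of_nonpos[OF generator_kernel_diag_nonpos[OF L, of x]] by auto
  have diag_ge: "\<epsilon> * L x x / \<alpha> x \<le> \<epsilon> * D x x" for x
    using mult_left_mono[OF avar_derivative_diag_ge[OF D L, of x], of \<epsilon>] \<open>0 < \<epsilon>\<close> by simp
  have L_diag_lower: "- 1 \<le> \<epsilon> * L x x / \<alpha> x" for x
    using L_diag(1)[of x] \<alpha> by (simp add: pos_le_divide_eq)
  have "0 \<le> 1 + \<epsilon> * D x x" for x
    using L_diag_lower[of x] diag_ge[of x] by linarith
  then have stoch: "perturb_id \<epsilon> D \<in> stoch_kernels"
    using perturb_id_stoch_kernels_iff[OF \<open>0 < \<epsilon>\<close>] D_gen by blast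
  have "perturb_id \<epsilon> D x y \<le> perturb_id \<epsilon> L x y / \<alpha> x" for x y
  proof (cases "y = x")
    case True
    have "1 + \<epsilon> * D x x \<le> 1"
      using generator_kernel_diag_nonpos[OF D_gen] \<open>0 < \<epsilon>\<close> by (simp add: mult_nonneg_nonpos)
    also have "1 \<le> (1 + \<epsilon> * L x x) / \<alpha> x"
      using L_diag(2)[of x] \<alpha> by (simp add: le_divide_eq_1)
    finally show ?thesis using True by (simp add: perturb_id_def id_kernel_def)
  next
    case False
    have "\<epsilon> * D x y \<le> \<epsilon> * (L x y / \<alpha> x)"
      using D_off[OF False] \<open>0 < \<epsilon>\<close> by (intro mult_left_mono) auto
    then show ?thesis using False by (simp add: perturb_id_def id_kernel_def)
  qed
  with stoch show ?thesis
    unfolding risk_multikernel_def avar_dual_def stoch_kernels_def by auto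
qed

lemma diff_quotient_avar_multikernel:
  assumes "0 < \<epsilon>" and "generator_kernel L" and "\<forall>x. 0 < \<alpha> x"
    and "\<forall>x. \<epsilon> * \<bar>L x x\<bar> \<le> min (\<alpha> x) (1 - \<alpha> x)"
  shows "diff_quotient \<epsilon> ` risk_multikernel (avar_dual \<alpha>) (perturb_id \<epsilon> L) = avar_derivative \<alpha> L"
  using assms perturb_id_in_avar_multikernel perturb_id_in_avar_multikernel_imp
  by (auto simp: image_diff_quotient)

lemma knorm_diff_le_off_diag:
  fixes D D' E :: "'x::finite kernel"
  assumes mass: "\<And>x. kmass D x = kmass D' x" and "0 \<le> c"
    and off_diag: "\<And>x y. y \<noteq> x \<Longrightarrow> \<bar>D x y - D' x y\<bar> \<le> c * \<bar>E x y\<bar>"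
  shows "knorm (D - D') \<le> 2 * c * knorm E"
  unfolding knorm_le_iff
proof
  fix x
  have "D x x - D' x x = - (\<Sum>y\<in>UNIV - {x}. D x y - D' x y)"
    using mass[of x] kmass_eq_diag_plus_off_diag[of D x] kmass_eq_diag_plus_off_diag[of D' x]
    by (simp add: sum_subtractf)
  then have "\<bar>D x x - D' x x\<bar> \<le> (\<Sum>y\<in>UNIV - {x}. \<bar>D x y - D' x y\<bar>)"
    by simp
  moreover have "(\<Sum>y\<in>UNIV. \<bar>(D - D') x y\<bar>) = \<bar>D x x - D' x x\<bar> + (\<Sum>y\<in>UNIV - {x}. \<bar>D x y - D' x y\<bar>)"
    by (simp add: sum.remove)
  moreover have "(\<Sum>y\<in>UNIV - {x}. \<bar>D x y - D' x y\<bar>) \<le> c * (\<Sum>y\<in>UNIV. \<bar>E x y\<bar>)"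
  proof -
    have "(\<Sum>y\<in>UNIV - {x}. \<bar>D x y - D' x y\<bar>) \<le> (\<Sum>y\<in>UNIV - {x}. c * \<bar>E x y\<bar>)"
      using off_diag by (intro sum_mono) auto
    also have "\<dots> \<le> (\<Sum>y\<in>UNIV. c * \<bar>E x y\<bar>)"
      using \<open>0 \<le> c\<close> by (intro sum_mono2) auto
    finally show ?thesis by (simp add: sum_distrib_left)
  qed
  moreover have "c * (\<Sum>y\<in>UNIV. \<bar>E x y\<bar>) \<le> c * knorm E"
    using \<open>0 \<le> c\<close> row_sum_abs_le_knorm by (rule mult_left_mono[rotated])
  ultimately show "(\<Sum>y\<in>UNIV. \<bar>(D - D') x y\<bar>) \<le> 2 * c * knorm E" by linarith
qed

lemma avar_derivative_approx:
  fixes L K :: "'x::finite kernel"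
  assumes K: "generator_kernel K" and "0 < amin" and \<alpha>: "\<forall>x. amin \<le> \<alpha> x"
    and D: "D \<in> avar_derivative \<alpha> L"
  shows "\<exists>D'\<in>avar_derivative \<alpha> K. knorm (D - D') \<le> 2 * knorm (L - K) / amin"
proof -
  have \<alpha>_pos: "0 < \<alpha> x" for x using \<alpha> \<open>0 < amin\<close> by (meson less_le_trans)
  have D_gen: "generator_kernel D" and D_off: "\<And>x y. y \<noteq> x \<Longrightarrow> D x y \<le> L x y / \<alpha> x"
    using D unfolding avar_derivative_def by auto
  define F where "F x y = min (D x y) (K x y / \<alpha> x)" for x y
  define D' where "D' x y = (if y = x then - (\<Sum>z\<in>UNIV - {x}. F x z) else F x y)" for x y
  have "generator_kernel D'"
    unfolding generator_kernel_def
  proof (intro conjI allI impI)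
    fix x y :: 'x assume "y \<noteq> x"
    then show "0 \<le> D' x y"
      using D_gen K \<alpha>_pos[of x] by (simp add: D'_def F_def generator_kernel_def)
  next
    fix x :: 'x
    have "(\<Sum>y\<in>UNIV - {x}. D' x y) = (\<Sum>y\<in>UNIV - {x}. F x y)"
      by (rule sum.cong) (auto simp: D'_def)
    then show "kmass D' x = 0" by (simp add: kmass_eq_diag_plus_off_diag D'_def)
  qed
  then have D'_in: "D' \<in> avar_derivative \<alpha> K"
    unfolding avar_derivative_def by (auto simp: D'_def F_def)
  have entry: "\<bar>D x y - D' x y\<bar> \<le> 1 / amin * \<bar>(L - K) x y\<bar>" if "y \<noteq> x" for x y
  proof -
    have "D x y - F x y \<le> max 0 (D x y - K x y / \<alpha> x)"
      by (simp add: F_def)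
    also have "\<dots> \<le> max 0 ((L x y - K x y) / \<alpha> x)"
      using D_off[OF that] by (simp add: diff_divide_distrib)
    also have "\<dots> \<le> \<bar>L x y - K x y\<bar> / \<alpha> x"
      using \<alpha>_pos[of x] by (simp add: divide_right_mono)
    also have "\<dots> \<le> \<bar>L x y - K x y\<bar> / amin"
      using \<alpha> \<alpha>_pos[of x] \<open>0 < amin\<close> by (intro divide_left_mono) auto
    finally show ?thesis using that by (simp add: D'_def F_def)
  qed
  have "knorm (D - D') \<le> 2 * (1 / amin) * knorm (L - K)"
    using D_gen \<open>generator_kernel D'\<close> \<open>0 < amin\<close> entry
    by (intro knorm_diff_le_off_diag) (auto simp: generator_kernel_def)
  then have "knorm (D - D') \<le> 2 * knorm (L - K) / amin" by simp
  with D'_in show ?thesis by blast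
qed

lemma kdist_avar_derivative_le:
  fixes L K :: "'x::finite kernel"
  assumes "generator_kernel L" and "generator_kernel K" and "0 < amin" and "\<forall>x. amin \<le> \<alpha> x"
  shows "kdist (avar_derivative \<alpha> L) (avar_derivative \<alpha> K) \<le> 2 * knorm (L - K) / amin"
proof (rule kdist_leI)
  fix A assume "A \<in> avar_derivative \<alpha> L"
  then show "\<exists>D\<in>avar_derivative \<alpha> K. knorm (A - D) \<le> 2 * knorm (L - K) / amin"
    by (rule avar_derivative_approx[OF assms(2-4)])
next
  fix A assume "A \<in> avar_derivative \<alpha> K"
  then show "\<exists>D\<in>avar_derivative \<alpha> L. knorm (A - D) \<le> 2 * knorm (L - K) / amin"
    using avar_derivative_approx[OF assms(1,3,4), of A K] by (simp add: knorm_minus_commute[of K L])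
qed

lemma kdist_avar_derivative_tendsto_0:
  fixes Ks :: "nat \<Rightarrow> 'x::finite kernel"
  assumes "\<And>n. generator_kernel (Ks n)" and "generator_kernel K"
    and "0 < amin" and \<alpha>: "\<forall>x. amin \<le> \<alpha> x"
    and lim: "(\<lambda>n. knorm (Ks n - K)) \<longlonglongrightarrow> 0"
  shows "(\<lambda>n. kdist (avar_derivative \<alpha> (Ks n)) (avar_derivative \<alpha> K)) \<longlonglongrightarrow> 0"
proof (rule tendsto_sandwich[OF always_eventually always_eventually])
  have "\<forall>x. 0 < \<alpha> x" using \<alpha> \<open>0 < amin\<close> by (meson less_le_trans)
  then show "\<forall>n. 0 \<le> kdist (avar_derivative \<alpha> (Ks n)) (avar_derivative \<alpha> K)"
    using assms zero_in_avar_derivative by (intro allI kdist_nonneg) blast+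
  show "\<forall>n. kdist (avar_derivative \<alpha> (Ks n)) (avar_derivative \<alpha> K) \<le> ereal (2 * knorm (Ks n - K) / amin)"
    using assms kdist_avar_derivative_le by blast
  have "(\<lambda>n. 2 * knorm (Ks n - K) / amin) \<longlonglongrightarrow> 2 * 0 / amin"
    by (intro tendsto_intros lim) (use \<open>0 < amin\<close> in simp)
  then show "(\<lambda>n. ereal (2 * knorm (Ks n - K) / amin)) \<longlonglongrightarrow> 0"
    by (simp add: zero_ereal_def)
qed (rule tendsto_const)

lemma eventually_diag_small:
  fixes Ks :: "nat \<Rightarrow> 'x::finite kernel"
  assumes "\<forall>n. 0 < \<epsilon> n" and "\<epsilon> \<longlonglongrightarrow> 0" and "(\<lambda>n. knorm (Ks n - K)) \<longlonglongrightarrow> 0" and "0 < c"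
  shows "\<forall>\<^sub>F n in sequentially. \<forall>x. \<epsilon> n * \<bar>Ks n x x\<bar> \<le> c"
proof -
  have "(\<lambda>n. \<epsilon> n * (knorm K + knorm (Ks n - K))) \<longlonglongrightarrow> 0 * (knorm K + 0)"
    using assms by (intro tendsto_intros)
  then have "\<forall>\<^sub>F n in sequentially. \<epsilon> n * (knorm K + knorm (Ks n - K)) < c"
    using \<open>0 < c\<close> by (simp add: order_tendstoD(2))
  then show ?thesis
  proof eventually_elim
    case (elim n)
    have "\<epsilon> n * \<bar>Ks n x x\<bar> \<le> \<epsilon> n * (knorm K + knorm (Ks n - K))" for x
      using abs_le_knorm[of K x x] abs_le_knorm[of "Ks n - K" x x] assms(1)
      by (intro mult_left_mono) (auto simp: less_imp_le)
    with elim show ?case by (meson less_imp_le order_trans)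
  qed
qed

lemma kdist_diff_quotient_avar_tendsto_0:
  fixes Ks :: "nat \<Rightarrow> 'x::finite kernel"
  assumes "0 < amin" and "amax < 1" and \<alpha>: "\<forall>x. amin \<le> \<alpha> x \<and> \<alpha> x \<le> amax"
    and \<epsilon>: "\<forall>n. 0 < \<epsilon> n" "\<epsilon> \<longlonglongrightarrow> 0"
    and Ks: "\<And>n. generator_kernel (Ks n)" and K: "generator_kernel K"
    and lim: "(\<lambda>n. knorm (Ks n - K)) \<longlonglongrightarrow> 0"
  shows "(\<lambda>n. kdist (diff_quotient (\<epsilon> n) ` risk_multikernel (avar_dual \<alpha>) (perturb_id (\<epsilon> n) (Ks n)))
                    (avar_derivative \<alpha> K)) \<longlonglongrightarrow> 0"
proof (rule Lim_transform_eventually)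
  have \<alpha>_pos: "\<forall>x. 0 < \<alpha> x" using \<alpha> \<open>0 < amin\<close> by (auto intro: less_le_trans)
  show "(\<lambda>n. kdist (avar_derivative \<alpha> (Ks n)) (avar_derivative \<alpha> K)) \<longlonglongrightarrow> 0"
    using \<alpha> by (intro kdist_avar_derivative_tendsto_0[OF Ks K \<open>0 < amin\<close> _ lim]) auto
  have margin: "min amin (1 - amax) \<le> min (\<alpha> x) (1 - \<alpha> x)" for x
    using \<alpha> by (auto simp: min_le_iff_disj)
  have "0 < min amin (1 - amax)" using assms(1,2) by simp
  from eventually_diag_small[OF \<epsilon> lim this]
  show "\<forall>\<^sub>F n in sequentially. kdist (avar_derivative \<alpha> (Ks n)) (avar_derivative \<alpha> K) =
      kdist (diff_quotient (\<epsilon> n) ` risk_multikernel (avar_dual \<alpha>) (perturb_id (\<epsilon> n) (Ks n)))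
            (avar_derivative \<alpha> K)"
  proof eventually_elim
    case (elim n)
    then have "\<forall>x. \<epsilon> n * \<bar>Ks n x x\<bar> \<le> min (\<alpha> x) (1 - \<alpha> x)"
      using margin order_trans by blast
    then show ?case
      using diff_quotient_avar_multikernel[OF \<epsilon>(1)[rule_format] Ks \<alpha>_pos] by simp
  qed
qed

theorem theorem7p6:
  fixes \<alpha> :: "'x::finite \<Rightarrow> real" and amin amax :: real and K :: "'x kernel"
  assumes "0 < amin" and "amin \<le> amax" and "amax < 1"
    and "\<forall>x. amin \<le> \<alpha> x \<and> \<alpha> x \<le> amax"
    and "K \<in> tangent_cone_I"
  shows "semidiff_at_I (risk_multikernel (avar_dual \<alpha>)) K
           {D \<in> tangent_cone_I. (\<forall>x y. y \<noteq> x \<longrightarrow> 0 \<le> D x y \<and> D x y \<le> K x y / \<alpha> x)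
                                \<and> (\<forall>x. kmass D x = 0)}"
proof -
  have \<alpha>_pos: "\<forall>x. 0 < \<alpha> x" using assms(1,4) by (auto intro: less_le_trans)
  have K: "generator_kernel K" using assms(5) tangent_cone_I_iff_generator_kernel by blast
  have T: "{D \<in> tangent_cone_I. (\<forall>x y. y \<noteq> x \<longrightarrow> 0 \<le> D x y \<and> D x y \<le> K x y / \<alpha> x)
                                \<and> (\<forall>x. kmass D x = 0)} = avar_derivative \<alpha> K"
    by (auto simp: avar_derivative_def tangent_cone_I_iff_generator_kernel generator_kernel_def)
  show ?thesis
    unfolding semidiff_at_I_def T diff_quotient_def[symmetric] perturb_id_def[symmetric]
    using assms(5) zero_in_avar_derivative[OF K \<alpha>_pos]
      kdist_diff_quotient_avar_tendsto_0[OF assms(1,3,4) _ _ _ K]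
    by (auto simp: tangent_cone_I_iff_generator_kernel)
qed

end
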